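(* In the learning procedure described in the context, let $j\ge1$ be an iteration at which the candidate $c_j\in C_{j-1}$ is refuted by the verifier with counterexample $x_j$ (so that $C_j$ is defined). Then there exists a half-space $H^*_j=\{c\in\mathbb{R}^r : a^t c\ge \beta\}$ ($a\in\mathbb{R}^r$ nonzero, $\beta\in\mathbb{R}$) such that (a) $c_j$ lies on the boundary hyperplane $\{c: a^tc=\beta\}$ of $H^*_j$, and (b) $C_j\subseteq C_{j-1}\cap H^*_j$.
   Context: Let $X\subseteq\mathbb{R}^n$ contain $0$, $U=\{u\in\mathbb{R}^m: Au\ge b\}$, and $f:X\times U\to\mathbb{R}^n$ continuously differentiable with $f(0,0)=0$. A control Lyapunov function (CLF) is a smooth radially unbounded $V$ with $V(0)=0$, $V(x)>0$ for $x\neq0$, and $\min_{u\in U}\nabla V(x)\cdot f(x,u)<0$ for $x\ne 0$. Fix differentiable basis functions $g_1,\dots,g_r$, set $V_c=\sum_k c_kg_k$, let $C\subseteq\mathbb{R}^r$ be a hyper-rectangular box and $\mathcal{D}:X\to U$ an arbitrary demonstrator. The learning procedure: $C_0=\{c\in C:V_c(0)=0\}$; at iteration $j\ge1$, if $C_{j-1}\ne\emptyset$ choose $c_j\in C_{j-1}$; a verifier either certifies $V_{c_j}$ as a CLF or returns $x_j\neq0$ with $V_{c_j}(x_j)\le0$ or $\nabla V_{c_j}(x_j)\cdot f(x_j,u)\ge0$ for all $u\in U$; then $u_j=\mathcal{D}(x_j)$ and $C_j=C_{j-1}\cap\{c:V_c(x_j)>0\text{ and }\nabla V_c(x_j)\cdot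 f(x_j,u_j)<0\}$. *)

theory Defs
  imports "HOL-Analysis.Analysis"
begin

definition Vc :: "('r::finite \<Rightarrow> real^'n::finite \<Rightarrow> real) \<Rightarrow> real^'r \<Rightarrow> real^'n \<Rightarrow> real" where
  "Vc g c x = (\<Sum>k\<in>UNIV. c $ k * g k x)"

definition gradVc :: "('r::finite \<Rightarrow> real^'n::finite \<Rightarrow> real^'n) \<Rightarrow> real^'r \<Rightarrow> real^'n \<Rightarrow> real^'n" where
  "gradVc dg c x = (\<Sum>k\<in>UNIV. c $ k *\<^sub>R dg k x)"

end

theory Submission
  imports Defs
begin

text \<open>Both conditions imposed at a counterexample are strict linear inequalities in the
  coefficient vector c, and the refuted candidate violates at least one of them. The cut
  through the candidate parallel to that violated constraint is the required half-space.\<close>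

lemma Vc_eq_inner: "Vc g c x = (\<chi> k. g k x) \<bullet> c"
  by (simp add: Vc_def inner_vec_def mult.commute)

lemma gradVc_inner_eq: "gradVc dg c x \<bullet> v = (\<chi> k. dg k x \<bullet> v) \<bullet> c"
proof -
  have "gradVc dg c x \<bullet> v = (\<Sum>k\<in>UNIV. c $ k * (dg k x \<bullet> v))"
    by (simp add: gradVc_def inner_sum_left)
  also have "\<dots> = (\<chi> k. dg k x \<bullet> v) \<bullet> c"
    by (simp add: inner_vec_def mult.commute)
  finally show ?thesis .
qed

lemma halfspace_through_point_superset:
  fixes a p :: "'a::euclidean_space"
  assumes S: "S \<subseteq> {c. 0 < a \<bullet> c}" and p: "a \<bullet> p \<le> 0"
  shows "\<exists>a' \<beta>. a' \<noteq> 0 \<and> a' \<bullet> p = \<beta> \<and> S \<subseteq> {c. \<beta> \<le> a' \<bullet> c}"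
proof (cases "S = {}")
  case True
  obtain e :: 'a where "e \<in> Basis" using nonempty_Basis by blast
  then have "e \<noteq> 0" by auto
  with True show ?thesis by blast
next
  case False
  then have "a \<noteq> 0" using S by auto
  moreover have "S \<subseteq> {c. a \<bullet> p \<le> a \<bullet> c}" using S p by force
  ultimately show ?thesis by blast
qed

theorem lemma2:
  fixes X :: "(real^'n::finite) set"
    and A :: "real^'m::finite^'p::finite" and b :: "real^'p"
    and U :: "(real^'m) set"
    and f :: "(real^'n) \<times> (real^'m) \<Rightarrow> real^'n"
    and g :: "'r::finite \<Rightarrow> real^'n \<Rightarrow> real"
    and dg :: "'r \<Rightarrow> real^'n \<Rightarrow> real^'n"
    and lo hi :: "real^'r"
    and C :: "(real^'r) set"
    and D :: "real^'n \<Rightarrow> real^'m"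
    and Cs :: "nat \<Rightarrow> (real^'r) set"
    and cs :: "nat \<Rightarrow> real^'r"
    and xs :: "nat \<Rightarrow> real^'n"
    and j :: nat
  assumes X0: "0 \<in> X"
    and U_def: "U = {u. \<forall>i. (A *v u) $ i \<ge> b $ i}"
    and f_C1: "\<exists>f'. (\<forall>z\<in>X \<times> U. (f has_derivative blinfun_apply (f' z)) (at z within X \<times> U))
                    \<and> continuous_on (X \<times> U) f'"
    and f00: "f (0, 0) = 0"
    and g_grad: "\<And>k x. GDERIV (g k) x :> dg k x"
    and C_box: "C = cbox lo hi"
    and D_maps: "\<And>x. x \<in> X \<Longrightarrow> D x \<in> U"
    and C0: "Cs 0 = {c \<in> C. Vc g c 0 = 0}"
    and choose: "\<And>i. 1 \<le> i \<Longrightarrow> i \<le> j \<Longrightarrow> cs i \<in> Cs (i - 1)"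
    and cex_in: "\<And>i. 1 \<le> i \<Longrightarrow> i \<le> j \<Longrightarrow> xs i \<in> X \<and> xs i \<noteq> 0"
    and cex: "\<And>i. 1 \<le> i \<Longrightarrow> i \<le> j \<Longrightarrow>
               Vc g (cs i) (xs i) \<le> 0 \<or> (\<forall>u\<in>U. gradVc dg (cs i) (xs i) \<bullet> f (xs i, u) \<ge> 0)"
    and update: "\<And>i. 1 \<le> i \<Longrightarrow> i \<le> j \<Longrightarrow>
               Cs i = Cs (i - 1) \<inter> {c. Vc g c (xs i) > 0 \<and> gradVc dg c (xs i) \<bullet> f (xs i, D (xs i)) < 0}"
    and j1: "1 \<le> j"
  shows "\<exists>a \<beta>. a \<noteq> 0 \<and> a \<bullet> cs j = \<beta> \<and> Cs j \<subseteq> Cs (j - 1) \<inter> {c. a \<bullet> c \<ge> \<beta>}"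
proof -
  let ?x = "xs j" and ?u = "D (xs j)"
  have upd: "Cs j = Cs (j - 1) \<inter> {c. Vc g c ?x > 0 \<and> gradVc dg c ?x \<bullet> f (?x, ?u) < 0}"
    using update[OF j1 order.refl] .
  have "?u \<in> U" using D_maps cex_in[OF j1 order.refl] by blast
  then obtain a where "a \<bullet> cs j \<le> 0" and "Cs j \<subseteq> {c. 0 < a \<bullet> c}"
  proof (cases "Vc g (cs j) ?x \<le> 0")
    case True
    then show ?thesis
      using that[of "\<chi> k. g k ?x"] upd by (auto simp: Vc_eq_inner)
  next
    case False
    with cex[OF j1 order.refl] \<open>?u \<in> U\<close> have "gradVc dg (cs j) ?x \<bullet> f (?x, ?u) \<ge> 0"
      by blast
    then show ?thesis
      using that[of "- (\<chi> k. dg k ?x \<bullet> f (?x, ?u))"] upd by (auto simp: gradVc_inner_eq)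
  qed
  then obtain a' \<beta> where "a' \<noteq> 0" "a' \<bullet> cs j = \<beta>" "Cs j \<subseteq> {c. \<beta> \<le> a' \<bullet> c}"
    using halfspace_through_point_superset by blast
  with upd show ?thesis by blast
qed

end
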